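(* Let $\rho$ be a representation of $D^{2,2,2}$ and let $\{i,j,k\}=\{1,2,3\}$. With the notation of the context: 1. $\psi_i(x_i)=X^1_0$; 2. $\psi_i(x_j)=\psi_k(x_j)=\nu^0(y_iy_k)$; 3. $\psi_i(y_i)=\nu^0(x_i(y_j+y_k))$; 4. $\psi_i(y_j)=\nu^0(y_i(x_j+y_k))$; 5. $\psi_i(I)=\nu^0(y_i(y_j+y_k))$; 6. $\psi_i(y_jy_k)=\nu^0(y_i(x_j+x_k))$.
   Context: $D^{2,2,2}$ is the modular lattice generated by $x_1,y_1,x_2,y_2,x_3,y_3$ subject only to $x_i\subseteq y_i$ ($i=1,2,3$), with a greatest element $I$ adjoined. Meet is written $ab$, join $a+b$. A representation $\rho$ of $D^{2,2,2}$ in a finite-dimensional vector space $X_0$ is a lattice morphism from $D^{2,2,2}$ to the lattice of subspaces of $X_0$, with $\rho(I)=X_0$. Write $X_i=\rho(x_i)\subseteq Y_i=\rho(y_i)$. Put $R=Y_1\oplus Y_2\oplus Y_3$ (triples $(\eta_1,\eta_2,\eta_3)$ with $\eta_i\in Y_i$) and $X^1_0=\{(\eta_1,\eta_2,\eta_3)\in R:\sum\eta_i=0\}$. Define subspaces of $R$: - $G_i$: triples with $i$-th coordinate in $Y_i$ and other coordinates $0$; - $H_i$: triples with $i$-th coordinate in $X_i$ and other coordinates $0$; - $G'_i$: triples with $i$-th coordinate in $X_i$ and other coordinates arbitrary in the respective $Y$'s; - $H'_i$: triples with $i$-th coordinate $0$. The representation $\Phi^+\rho$ of $D^{2,2,2}$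 in $X^1_0$ is given by $\Phi^+\rho(y_i)=G'_i\cap X^1_0$, $\Phi^+\rho(x_i)=H'_i\cap X^1_0$ and $\Phi^+\rho(I)=X^1_0$. Set $\nu^1(a)=\Phi^+\rho(a)$, viewed as a subspace of $R$. $\nu^0$ is the representation of $D^{2,2,2}$ in $R$ with $\nu^0(y_i)=X^1_0+G_i$, $\nu^0(x_i)=X^1_0+H_i$, $\nu^0(I)=R$. The joint maps are defined by $\psi_i(a)=X^1_0+G_i\cap(H'_i+\nu^1(a))$ for $a\in D^{2,2,2}$. *)

theory Defs
  imports "HOL-Analysis.Analysis"
begin

definition ssum :: "'v::plus set \<Rightarrow> 'v set \<Rightarrow> 'v set" (infixl "\<oplus>\<^sub>s" 65) where
  "A \<oplus>\<^sub>s B = {a + b | a b. a \<in> A \<and> b \<in> B}"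

text \<open>Lattice terms over the generators x_1,y_1,x_2,y_2,x_3,y_3 and the adjoined top I
  of D^{2,2,2}. Every element of D^{2,2,2} is the class of such a term.\<close>
datatype lterm = Lx nat | Ly nat | LI | LMeet lterm lterm | LJoin lterm lterm

text \<open>Value of a lattice term under the (unique) lattice morphism into a subspace lattice
  determined by images gx i, gy i of x_i, y_i and image tp of I.\<close>
fun leval :: "(nat \<Rightarrow> 'v::plus set) \<Rightarrow> (nat \<Rightarrow> 'v set) \<Rightarrow> 'v set \<Rightarrow> lterm \<Rightarrow> 'v set" where
  "leval gx gy tp (Lx i) = gx i"
| "leval gx gy tp (Ly i) = gy i"
| "leval gx gy tp LI = tp"
| "leval gx gy tp (LMeet a b) = leval gx gy tp a \<inter> leval gx gy tp b"
| "leval gx gy tp (LJoin a b) = leval gx gy tp a \<oplus>\<^sub>s leval gx gy tp b"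

definition is_rep :: "(nat \<Rightarrow> ('a::field ^ 'n) set) \<Rightarrow> (nat \<Rightarrow> ('a ^ 'n) set) \<Rightarrow> bool" where
  "is_rep X Y \<longleftrightarrow> (\<forall>i\<in>{1,2,3}. vec.subspace (X i) \<and> vec.subspace (Y i) \<and> X i \<subseteq> Y i)"

type_synonym 'v triple = "'v \<times> 'v \<times> 'v"

fun coord :: "nat \<Rightarrow> 'v triple \<Rightarrow> 'v" where
  "coord i t = (if i = 1 then fst t else if i = 2 then fst (snd t) else snd (snd t))"

definition RR :: "(nat \<Rightarrow> 'v set) \<Rightarrow> 'v triple set" where
  "RR Y = {t. \<forall>i\<in>{1,2,3}. coord i t \<in> Y i}"

definition X10 :: "(nat \<Rightarrow> 'v::monoid_add set) \<Rightarrow> 'v triple set" where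
  "X10 Y = {t \<in> RR Y. coord 1 t + coord 2 t + coord 3 t = 0}"

definition GG :: "(nat \<Rightarrow> 'v::zero set) \<Rightarrow> nat \<Rightarrow> 'v triple set" where
  "GG Y i = {t \<in> RR Y. coord i t \<in> Y i \<and> (\<forall>l\<in>{1,2,3}. l \<noteq> i \<longrightarrow> coord l t = 0)}"

definition HH :: "(nat \<Rightarrow> 'v::zero set) \<Rightarrow> (nat \<Rightarrow> 'v set) \<Rightarrow> nat \<Rightarrow> 'v triple set" where
  "HH X Y i = {t \<in> RR Y. coord i t \<in> X i \<and> (\<forall>l\<in>{1,2,3}. l \<noteq> i \<longrightarrow> coord l t = 0)}"

definition GG' :: "(nat \<Rightarrow> 'v set) \<Rightarrow> (nat \<Rightarrow> 'v set) \<Rightarrow> nat \<Rightarrow> 'v triple set" where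
  "GG' X Y i = {t \<in> RR Y. coord i t \<in> X i}"

definition HH' :: "(nat \<Rightarrow> 'v::zero set) \<Rightarrow> nat \<Rightarrow> 'v triple set" where
  "HH' Y i = {t \<in> RR Y. coord i t = 0}"

text \<open>nu^1 = Phi^+ rho, viewed inside R.\<close>
definition nu1 :: "(nat \<Rightarrow> 'v::monoid_add set) \<Rightarrow> (nat \<Rightarrow> 'v set) \<Rightarrow> lterm \<Rightarrow> 'v triple set" where
  "nu1 X Y = leval (\<lambda>i. HH' Y i \<inter> X10 Y) (\<lambda>i. GG' X Y i \<inter> X10 Y) (X10 Y)"

definition nu0 :: "(nat \<Rightarrow> 'v::monoid_add set) \<Rightarrow> (nat \<Rightarrow> 'v set) \<Rightarrow> lterm \<Rightarrow> 'v triple set" where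
  "nu0 X Y = leval (\<lambda>i. X10 Y \<oplus>\<^sub>s HH X Y i) (\<lambda>i. X10 Y \<oplus>\<^sub>s GG Y i) (RR Y)"

definition psi :: "(nat \<Rightarrow> 'v::monoid_add set) \<Rightarrow> (nat \<Rightarrow> 'v set) \<Rightarrow> nat \<Rightarrow> lterm \<Rightarrow> 'v triple set" where
  "psi X Y i a = X10 Y \<oplus>\<^sub>s (GG Y i \<inter> (HH' Y i \<oplus>\<^sub>s nu1 X Y a))"

end

theory Submission
  imports Defs
begin

(* Let tsum : R \<rightarrow> X_0 add up the three coordinates, so that X^1_0 is its kernel in R. Both sides
   of every identity are preimages under tsum. On the one hand nu^0(a) is the preimage of rho(a),
   with I read as Y_1 + Y_2 + Y_3: the atoms X^1_0 + G_i, X^1_0 + H_i are the preimages of Y_i, X_i,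
   and preimages under the surjection tsum commute with sums and intersections. On the other hand
   G_i \<inter> (H'_i + V) is the copy of the projection coord_i(V) on the i-th axis, so
   psi_i(a) is the preimage of coord_i(nu^1(a)). Every nu^1(a) needed here has the form
   {t \<in> S_1 \<oplus> S_2 \<oplus> S_3. tsum t = 0}, whose i-th projection is S_i \<inter> (S_j + S_k). *)

definition tsum :: "'v::plus triple \<Rightarrow> 'v" where
  "tsum t = coord 1 t + coord 2 t + coord 3 t"

definition single :: "nat \<Rightarrow> 'v::zero \<Rightarrow> 'v triple" where
  "single l a = (if l = 1 then (a, 0, 0) else if l = 2 then (0, a, 0) else (0, 0, a))"

fun lgens :: "lterm \<Rightarrow> nat set" where
  "lgens (Lx l) = {l}"
| "lgens (Ly l) = {l}"
| "lgens LI = {}"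
| "lgens (LMeet a b) = lgens a \<union> lgens b"
| "lgens (LJoin a b) = lgens a \<union> lgens b"

lemma ssum_zero_left [simp]: "{0::'v::monoid_add} \<oplus>\<^sub>s A = A"
  unfolding ssum_def by auto

lemma ssum_zero_right [simp]: "A \<oplus>\<^sub>s {0::'v::monoid_add} = A"
  unfolding ssum_def by auto

lemma coord_add [simp]: "coord l (s + t) = coord l s + coord l t"
  by simp

lemma coord_diff [simp]: "coord l (s - t) = coord l s - coord l (t::'v::ab_group_add triple)"
  by simp

lemma coord_single [simp]:
  "l \<in> {1,2,3} \<Longrightarrow> m \<in> {1,2,3} \<Longrightarrow> coord m (single l a) = (if m = l then a else 0)"
  by (auto simp: single_def)

lemma ssum_mono: "A \<subseteq> A' \<Longrightarrow> B \<subseteq> B' \<Longrightarrow> A \<oplus>\<^sub>s B \<subseteq> A' \<oplus>\<^sub>s B'"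
  unfolding ssum_def by blast

declare coord.simps [simp del]

lemma tsum_add: "tsum (s + t) = tsum s + tsum (t::'v::ab_semigroup_add triple)"
  by (simp add: tsum_def ac_simps)

lemma tsum_diff: "tsum (s - t) = tsum s - tsum (t::'v::ab_group_add triple)"
  by (simp add: tsum_def algebra_simps)

lemma tsum_single [simp]: "l \<in> {1,2,3} \<Longrightarrow> tsum (single l a) = (a::'v::monoid_add)"
  by (auto simp: tsum_def)

lemma index_triple_cases:
  assumes "{i, j, k} = {1, 2, 3::nat}"
  shows "(i, j, k) \<in> {(1,2,3), (1,3,2), (2,1,3), (2,3,1), (3,1,2), (3,2,1)}"
proof -
  have "card {i, j, k} = 3"
    using assms by simp
  then have "i \<noteq> j" "j \<noteq> k" "i \<noteq> k"
    by (auto simp: card_insert_if split: if_splits)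
  moreover have "i \<in> {1,2,3}" "j \<in> {1,2,3}" "k \<in> {1,2,3}"
    using assms by blast+
  ultimately show ?thesis
    by auto
qed

lemma tsum_eq_index_triple:
  "{i, j, k} = {1, 2, 3} \<Longrightarrow> tsum t = coord i t + coord j t + coord k (t::'v::ab_semigroup_add triple)"
  by (drule index_triple_cases) (auto simp: tsum_def ac_simps)

lemma mem_RR_index_triple:
  assumes "{i, j, k} = {1, 2, 3}"
  shows "t \<in> RR S \<longleftrightarrow> coord i t \<in> S i \<and> coord j t \<in> S j \<and> coord k t \<in> S k"
  unfolding RR_def by (simp only: flip: assms) simp

lemma coord_single_sum_index_triple:
  assumes "{i, j, k} = {1, 2, 3}"
  shows "coord i (single i a + single j b + single k c) = (a::'v::monoid_add)"
    and "coord j (single i a + single j b + single k c) = b"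
    and "coord k (single i a + single j b + single k c) = c"
  using index_triple_cases[OF assms] by auto

lemma X10_eq_tsum: "X10 S = {t \<in> RR S. tsum t = 0}"
  unfolding X10_def tsum_def ..

lemma X10_Int: "X10 S \<inter> X10 T = X10 (\<lambda>l. S l \<inter> T l)"
  unfolding X10_def RR_def by auto

lemma nu1_Lx: "l \<in> {1,2,3} \<Longrightarrow> 0 \<in> Y l \<Longrightarrow> nu1 X Y (Lx l) = X10 (Y(l := {0}))"
  unfolding nu1_def HH'_def X10_def RR_def by auto

lemma nu1_Ly: "l \<in> {1,2,3} \<Longrightarrow> X l \<subseteq> Y l \<Longrightarrow> nu1 X Y (Ly l) = X10 (Y(l := X l))"
  unfolding nu1_def GG'_def X10_def RR_def by auto

lemma nu1_LI: "nu1 X Y LI = X10 Y"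
  unfolding nu1_def by simp

lemma nu1_LMeet: "nu1 X Y (LMeet a b) = nu1 X Y a \<inter> nu1 X Y b"
  unfolding nu1_def by simp

lemma nu0_LMeet: "nu0 X Y (LMeet a b) = nu0 X Y a \<inter> nu0 X Y b"
  unfolding nu0_def by simp

lemma nu0_LJoin: "nu0 X Y (LJoin a b) = nu0 X Y a \<oplus>\<^sub>s nu0 X Y b"
  unfolding nu0_def by simp

context module
begin

lemma coord_image_X10:
  assumes ijk: "{i, j, k} = {1, 2, 3}" and Sj: "subspace (S j)" and Sk: "subspace (S k)"
  shows "coord i ` X10 S = S i \<inter> (S j \<oplus>\<^sub>s S k)"
proof (intro set_eqI iffI)
  fix a assume "a \<in> coord i ` X10 S"
  then obtain t where t: "t \<in> RR S" "tsum t = 0" and a: "a = coord i t"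
    unfolding X10_eq_tsum by blast
  have "a = - coord j t + - coord k t"
    using t(2) unfolding a tsum_eq_index_triple[OF ijk] by (simp add: algebra_simps eq_neg_iff_add_eq_0)
  moreover have "- coord j t \<in> S j" "- coord k t \<in> S k" "a \<in> S i"
    using t(1) Sj Sk subspace_neg unfolding a mem_RR_index_triple[OF ijk] by auto
  ultimately show "a \<in> S i \<inter> (S j \<oplus>\<^sub>s S k)"
    unfolding ssum_def by blast
next
  fix a assume "a \<in> S i \<inter> (S j \<oplus>\<^sub>s S k)"
  then obtain b c where "a \<in> S i" "b \<in> S j" "c \<in> S k" "a = b + c"
    unfolding ssum_def by blast
  define t where "t = single i a + single j (- b) + single k (- c)"
  have t: "coord i t = a" "coord j t = - b" "coord k t = - c"
    unfolding t_def by (rule coord_single_sum_index_triple[OF ijk])+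
  have "- b \<in> S j" "- c \<in> S k"
    using \<open>b \<in> S j\<close> \<open>c \<in> S k\<close> Sj Sk subspace_neg by blast+
  moreover have "a + - b + - c = 0"
    using \<open>a = b + c\<close> by simp
  ultimately have "t \<in> X10 S"
    using \<open>a \<in> S i\<close>
    unfolding X10_eq_tsum mem_RR_index_triple[OF ijk] tsum_eq_index_triple[OF ijk] by (simp add: t)
  then show "a \<in> coord i ` X10 S"
    using t(1) by (intro image_eqI[where x = t]) simp_all
qed

end

locale D222_representation = module +
  fixes X Y :: "nat \<Rightarrow> 'b set"
  assumes subspace_X: "l \<in> {1,2,3} \<Longrightarrow> subspace (X l)"
    and subspace_Y: "l \<in> {1,2,3} \<Longrightarrow> subspace (Y l)"
    and X_subset_Y: "l \<in> {1,2,3} \<Longrightarrow> X l \<subseteq> Y l"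
begin

lemma RR_add: "s \<in> RR Y \<Longrightarrow> t \<in> RR Y \<Longrightarrow> s + t \<in> RR Y"
  unfolding RR_def using subspace_Y subspace_add by simp

lemma RR_diff: "s \<in> RR Y \<Longrightarrow> t \<in> RR Y \<Longrightarrow> s - t \<in> RR Y"
  unfolding RR_def using subspace_Y subspace_diff by simp

lemma single_in_RR: "l \<in> {1,2,3} \<Longrightarrow> a \<in> Y l \<Longrightarrow> single l a \<in> RR Y"
  unfolding RR_def using subspace_Y subspace_0 by auto

lemma X10_add: "s \<in> X10 Y \<Longrightarrow> t \<in> X10 Y \<Longrightarrow> s + t \<in> X10 Y"
  unfolding X10_eq_tsum by (simp add: RR_add tsum_add)

lemma nu1_subset_X10: "nu1 X Y a \<subseteq> X10 Y"
  unfolding nu1_def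
proof (induction a)
  case (LJoin a b)
  then show ?case
    by (simp only: leval.simps ssum_def) (blast intro: X10_add)
qed auto

lemma axis_eq_single_image:
  assumes "l \<in> {1,2,3}" and "A \<subseteq> Y l"
  shows "{t \<in> RR Y. coord l t \<in> A \<and> (\<forall>m\<in>{1,2,3}. m \<noteq> l \<longrightarrow> coord m t = 0)} = single l ` A"
proof (intro set_eqI iffI)
  fix t assume t: "t \<in> {t \<in> RR Y. coord l t \<in> A \<and> (\<forall>m\<in>{1,2,3}. m \<noteq> l \<longrightarrow> coord m t = 0)}"
  have "t = single l (coord l t)"
    using t assms(1) by (cases t) (auto simp: single_def coord.simps)
  then show "t \<in> single l ` A"
    using t by blast
next
  fix t assume "t \<in> single l ` A"
  then obtain a where "a \<in> A" "t = single l a"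
    by blast
  moreover have "single l a \<in> RR Y"
    using assms \<open>a \<in> A\<close> single_in_RR by blast
  moreover have "\<forall>m\<in>{1,2,3}. m \<noteq> l \<longrightarrow> coord m (single l a) = 0"
    using assms(1) by simp
  ultimately show "t \<in> {t \<in> RR Y. coord l t \<in> A \<and> (\<forall>m\<in>{1,2,3}. m \<noteq> l \<longrightarrow> coord m t = 0)}"
    using assms(1) by simp
qed

lemma GG_eq_single_image: "l \<in> {1,2,3} \<Longrightarrow> GG Y l = single l ` Y l"
  unfolding GG_def by (rule axis_eq_single_image) auto

lemma HH_eq_single_image: "l \<in> {1,2,3} \<Longrightarrow> HH X Y l = single l ` X l"
  unfolding HH_def by (rule axis_eq_single_image) (simp_all add: X_subset_Y)

lemma GG_Int_HH'_ssum:
  assumes i: "i \<in> {1,2,3}" and V: "V \<subseteq> RR Y"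
  shows "GG Y i \<inter> (HH' Y i \<oplus>\<^sub>s V) = single i ` coord i ` V"
proof (intro set_eqI iffI)
  fix g assume "g \<in> GG Y i \<inter> (HH' Y i \<oplus>\<^sub>s V)"
  then obtain a h v where g: "g = single i a" "g = h + v" and h: "h \<in> HH' Y i" and v: "v \<in> V"
    unfolding GG_eq_single_image[OF i] ssum_def by blast
  have "a = coord i g"
    using i g(1) by simp
  also have "\<dots> = coord i v"
    using h g(2) unfolding HH'_def by simp
  finally show "g \<in> single i ` coord i ` V"
    using g(1) v by blast
next
  fix g assume "g \<in> single i ` coord i ` V"
  then obtain v where g: "g = single i (coord i v)" and v: "v \<in> V"
    by blast
  have "coord i v \<in> Y i"
    using v V i unfolding RR_def by blast
  then have "g \<in> GG Y i" and "g \<in> RR Y"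
    using i single_in_RR unfolding g GG_eq_single_image[OF i] by blast+
  moreover have "g - v \<in> HH' Y i"
    using i v V RR_diff[OF \<open>g \<in> RR Y\<close>, of v] unfolding HH'_def g by auto
  moreover have "g = (g - v) + v"
    by simp
  ultimately show "g \<in> GG Y i \<inter> (HH' Y i \<oplus>\<^sub>s V)"
    unfolding ssum_def using v by blast
qed

lemma X10_ssum_single_image:
  assumes l: "l \<in> {1,2,3}" and A: "A \<subseteq> Y l"
  shows "X10 Y \<oplus>\<^sub>s single l ` A = RR Y \<inter> tsum -` A"
proof (intro set_eqI iffI)
  fix t assume "t \<in> X10 Y \<oplus>\<^sub>s single l ` A"
  then obtain x a where "x \<in> RR Y" "tsum x = 0" "a \<in> A" "t = x + single l a"
    unfolding ssum_def X10_eq_tsum by blast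
  moreover have "single l a \<in> RR Y"
    using l A \<open>a \<in> A\<close> single_in_RR by blast
  ultimately show "t \<in> RR Y \<inter> tsum -` A"
    using l by (simp add: RR_add tsum_add)
next
  fix t assume t: "t \<in> RR Y \<inter> tsum -` A"
  define s where "s = single l (tsum t)"
  have "s \<in> single l ` A" and "s \<in> RR Y"
    using t l A single_in_RR unfolding s_def by auto
  then have "t - s \<in> X10 Y"
    using t l RR_diff unfolding X10_eq_tsum s_def by (simp add: tsum_diff)
  moreover have "t = (t - s) + s"
    by simp
  ultimately show "t \<in> X10 Y \<oplus>\<^sub>s single l ` A"
    unfolding ssum_def using \<open>s \<in> single l ` A\<close> by blast
qed

lemma psi_eq_vimage:
  assumes i: "i \<in> {1,2,3}"
  shows "psi X Y i a = RR Y \<inter> tsum -` coord i ` nu1 X Y a"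
proof -
  have V: "nu1 X Y a \<subseteq> RR Y"
    using nu1_subset_X10 unfolding X10_def by blast
  then have "coord i ` nu1 X Y a \<subseteq> Y i"
    using i unfolding RR_def by blast
  then show ?thesis
    unfolding psi_def GG_Int_HH'_ssum[OF i V] by (rule X10_ssum_single_image[OF i])
qed

lemma Y_subset_tsum_image: "l \<in> {1,2,3} \<Longrightarrow> Y l \<subseteq> tsum ` RR Y"
  using single_in_RR by (force simp: image_iff)

lemma tsum_image_ssum_closed: "tsum ` RR Y \<oplus>\<^sub>s tsum ` RR Y \<subseteq> tsum ` RR Y"
proof
  fix c assume "c \<in> tsum ` RR Y \<oplus>\<^sub>s tsum ` RR Y"
  then obtain s t where "s \<in> RR Y" "t \<in> RR Y" "c = tsum s + tsum t"
    unfolding ssum_def by blast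
  then show "c \<in> tsum ` RR Y"
    by (metis RR_add image_eqI tsum_add)
qed

lemma vimage_tsum_ssum:
  assumes "A \<subseteq> tsum ` RR Y" and "B \<subseteq> tsum ` RR Y"
  shows "(RR Y \<inter> tsum -` A) \<oplus>\<^sub>s (RR Y \<inter> tsum -` B) = RR Y \<inter> tsum -` (A \<oplus>\<^sub>s B)"
proof (intro set_eqI iffI)
  fix t assume "t \<in> (RR Y \<inter> tsum -` A) \<oplus>\<^sub>s (RR Y \<inter> tsum -` B)"
  then obtain s u where "s \<in> RR Y" "tsum s \<in> A" "u \<in> RR Y" "tsum u \<in> B" "t = s + u"
    unfolding ssum_def by blast
  then show "t \<in> RR Y \<inter> tsum -` (A \<oplus>\<^sub>s B)"
    unfolding ssum_def by (auto simp: RR_add tsum_add)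
next
  fix t assume "t \<in> RR Y \<inter> tsum -` (A \<oplus>\<^sub>s B)"
  then obtain a b where t: "t \<in> RR Y" "tsum t = a + b" and "a \<in> A" "b \<in> B"
    unfolding ssum_def by blast
  then obtain s where s: "s \<in> RR Y" "tsum s = a"
    using assms(1) by blast
  have "t = s + (t - s)" and "t - s \<in> RR Y \<inter> tsum -` B"
    using s t \<open>b \<in> B\<close> RR_diff by (auto simp: tsum_diff)
  then show "t \<in> (RR Y \<inter> tsum -` A) \<oplus>\<^sub>s (RR Y \<inter> tsum -` B)"
    unfolding ssum_def using s \<open>a \<in> A\<close> by blast
qed

lemma leval_subset_tsum_image:
  "lgens a \<subseteq> {1,2,3} \<Longrightarrow> leval X Y (tsum ` RR Y) a \<subseteq> tsum ` RR Y"
proof (induction a)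
  case (LJoin a b)
  then have "leval X Y (tsum ` RR Y) a \<oplus>\<^sub>s leval X Y (tsum ` RR Y) b \<subseteq> tsum ` RR Y \<oplus>\<^sub>s tsum ` RR Y"
    by (simp add: ssum_mono)
  then show ?case
    using tsum_image_ssum_closed by simp
next
  case (Lx l)
  then have "l \<in> {1,2,3}"
    by simp
  then show ?case
    using X_subset_Y Y_subset_tsum_image by (simp only: leval.simps) blast
next
  case (Ly l)
  then show ?case
    by (simp add: Y_subset_tsum_image)
next
  case LI
  show ?case
    by simp
next
  case (LMeet a b)
  then show ?case
    by (simp add: le_infI1)
qed

lemma nu0_eq_vimage:
  "lgens a \<subseteq> {1,2,3} \<Longrightarrow> nu0 X Y a = RR Y \<inter> tsum -` leval X Y (tsum ` RR Y) a"
proof (induction a)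
  case (Lx l)
  then have l: "l \<in> {1,2,3}"
    by simp
  show ?case
    unfolding nu0_def leval.simps HH_eq_single_image[OF l]
    by (rule X10_ssum_single_image[OF l X_subset_Y[OF l]])
next
  case (Ly l)
  then have l: "l \<in> {1,2,3}"
    by simp
  show ?case
    unfolding nu0_def leval.simps GG_eq_single_image[OF l]
    by (rule X10_ssum_single_image[OF l subset_refl])
next
  case LI
  show ?case
    unfolding nu0_def leval.simps by blast
next
  case (LMeet a b)
  then show ?case
    by (simp add: nu0_LMeet) blast
next
  case (LJoin a b)
  then show ?case
    using leval_subset_tsum_image by (simp add: nu0_LJoin vimage_tsum_ssum)
qed

context
  fixes i j k :: nat
  assumes ijk: "{i, j, k} = {1, 2, 3}"
begin

lemma index_mem: "i \<in> {1,2,3}" "j \<in> {1,2,3}" "k \<in> {1,2,3}"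
  using ijk by blast+

lemma index_distinct: "i \<noteq> j" "j \<noteq> k" "i \<noteq> k"
  using index_triple_cases[OF ijk] by auto

lemma psi_eq_nu0I:
  assumes "coord i ` nu1 X Y a = leval X Y (tsum ` RR Y) b" and "lgens b \<subseteq> {i, j, k}"
  shows "psi X Y i a = nu0 X Y b"
proof -
  have "lgens b \<subseteq> {1,2,3}"
    using assms(2) by (simp only: ijk)
  then show ?thesis
    using assms(1) by (simp add: psi_eq_vimage[OF index_mem(1)] nu0_eq_vimage)
qed

lemma subspace_index:
  "subspace (X i)" "subspace (X j)" "subspace (X k)" "subspace (Y i)" "subspace (Y j)" "subspace (Y k)"
  using index_mem subspace_X subspace_Y by blast+

lemma X_subset_Y_index: "X i \<subseteq> Y i" "X j \<subseteq> Y j" "X k \<subseteq> Y k"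
  using index_mem X_subset_Y by blast+

lemmas nu1_index =
  nu1_Lx[where X = X and Y = Y, OF index_mem(1) subspace_0[OF subspace_index(4)]]
  nu1_Lx[where X = X and Y = Y, OF index_mem(2) subspace_0[OF subspace_index(5)]]
  nu1_Ly[where X = X and Y = Y, OF index_mem(1) X_subset_Y_index(1)]
  nu1_Ly[where X = X and Y = Y, OF index_mem(2) X_subset_Y_index(2)]
  nu1_Ly[where X = X and Y = Y, OF index_mem(3) X_subset_Y_index(3)]

lemmas coord_image_simps =
  nu1_index nu1_LI nu1_LMeet X10_Int coord_image_X10[OF ijk] index_distinct index_distinct[symmetric]
  subspace_index subspace_single_0 subspace_inter X_subset_Y_index Int_absorb1 Int_absorb2

lemma psi_Lx_self: "psi X Y i (Lx i) = X10 Y"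
proof -
  have "0 \<in> Y j \<oplus>\<^sub>s Y k"
    using subspace_0[OF subspace_index(5)] subspace_0[OF subspace_index(6)] unfolding ssum_def by force
  then have "coord i ` nu1 X Y (Lx i) = {0}"
    by (simp add: coord_image_simps)
  then show ?thesis
    by (simp add: psi_eq_vimage[OF index_mem(1)] X10_eq_tsum) blast
qed

lemma psi_Lx_other: "psi X Y i (Lx j) = nu0 X Y (LMeet (Ly i) (Ly k))"
  by (rule psi_eq_nu0I) (simp_all add: coord_image_simps)

lemma psi_Ly_self: "psi X Y i (Ly i) = nu0 X Y (LMeet (Lx i) (LJoin (Ly j) (Ly k)))"
  by (rule psi_eq_nu0I) (simp_all add: coord_image_simps)

lemma psi_Ly_other: "psi X Y i (Ly j) = nu0 X Y (LMeet (Ly i) (LJoin (Lx j) (Ly k)))"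
  by (rule psi_eq_nu0I) (simp_all add: coord_image_simps)

lemma psi_LI: "psi X Y i LI = nu0 X Y (LMeet (Ly i) (LJoin (Ly j) (Ly k)))"
  by (rule psi_eq_nu0I) (simp_all add: coord_image_simps)

lemma psi_LMeet_Ly: "psi X Y i (LMeet (Ly j) (Ly k)) = nu0 X Y (LMeet (Ly i) (LJoin (Lx j) (Lx k)))"
  by (rule psi_eq_nu0I) (simp_all add: coord_image_simps)

end

end

theorem mainTheorem2:
  fixes X Y :: "nat \<Rightarrow> ('a::field ^ 'n) set" and i j k :: nat
  assumes "is_rep X Y"
    and "{i, j, k} = {1, 2, 3}" and "i \<noteq> j" and "j \<noteq> k" and "i \<noteq> k"
  shows "psi X Y i (Lx i) = X10 Y
    \<and> psi X Y i (Lx j) = nu0 X Y (LMeet (Ly i) (Ly k))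
    \<and> psi X Y k (Lx j) = nu0 X Y (LMeet (Ly i) (Ly k))
    \<and> psi X Y i (Ly i) = nu0 X Y (LMeet (Lx i) (LJoin (Ly j) (Ly k)))
    \<and> psi X Y i (Ly j) = nu0 X Y (LMeet (Ly i) (LJoin (Lx j) (Ly k)))
    \<and> psi X Y i LI = nu0 X Y (LMeet (Ly i) (LJoin (Ly j) (Ly k)))
    \<and> psi X Y i (LMeet (Ly j) (Ly k)) = nu0 X Y (LMeet (Ly i) (LJoin (Lx j) (Lx k)))"
proof -
  interpret D222_representation "(*s)" X Y
    using vec.module_axioms assms(1)
    unfolding D222_representation_def D222_representation_axioms_def is_rep_def by blast
  have kji: "{k, j, i} = {1, 2, 3}"
    using assms(2) by (simp add: insert_commute)
  have "psi X Y k (Lx j) = nu0 X Y (LMeet (Ly i) (Ly k))"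
    using psi_Lx_other[OF kji] by (simp add: nu0_LMeet Int_commute)
  \<comment> \<open>The distinctness hypotheses are implied by \<open>{i, j, k} = {1, 2, 3}\<close>.\<close>
  with assms(2) show ?thesis
    by (simp add: psi_Lx_self psi_Lx_other psi_Ly_self psi_Ly_other psi_LI psi_LMeet_Ly)
qed

end
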